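(* Let $\mathcal{G}$ be a MAG on vertex set $V$ and let $u$ be any structural imset over $V$ such that $\mathcal{I}_u=\mathcal{I}_{\mathcal{G}}$. Let $c$ be its characteristic imset, $c(S)=1-\sum_{T:\,S\subseteq T\subseteq V}u(T)$. Then $c$ is integer valued and: (i) if $S\in\mathcal{S}(\mathcal{G})$ then $c(S)=1$; (ii) if $S\notin\mathcal{S}(\mathcal{G})$ then $c(S)\le 0$.
   Context: A MAG is an acyclic directed mixed graph (directed and bidirected edges, no directed cycles) with $\mathrm{sib}(v)\cap\mathrm{an}(v)=\emptyset$ for all $v$ and in which every nonadjacent pair is m-separated by some set (a path is m-connecting given $C$ if all its colliders lie in $\mathrm{an}(C)$ and all noncolliders lie outside $C$). $\mathrm{barren}(W)=\{w\in W:\mathrm{de}(w)\cap W=\{w\}\}$; a nonempty $H$ is a head if $\mathrm{barren}(H)=H$ and $H$ lies in one district of $\mathcal{G}_{\mathrm{an}(H)}$; $\mathrm{tail}(H)=(\mathrm{dis}_{\mathrm{an}(H)}(H)\setminus H)\cup\mathrm{pa}(\mathrm{dis}_{\mathrm{an}(H)}(H))$; $\mathcal{S}(\mathcal{G})=\{H\cup A:H\text{ a head},A\subseteq\mathrm{tail}(H)\}$. Imsets are integer functions on $\mathcal{P}(V)$; $\delta_A$ is the indicator of $A$; $u_{\langle A,B|C\rangle}=\delta_{A\cup B\cup C}-\delta_{A\cup C}-\delta_{B\cup C}+\delta_C$ for disjoint $A,B,C$, elementary when $|A|=|B|=1$; combinatorial = nonnegative integer combination of elementary imsets; structural = some positive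 integer multiple is combinatorial. $\langle A,B|C\rangle$ is represented in $u$ if $ku-u_{\langle A,B|C\rangle}$ is combinatorial for some $k\in\mathbb{N}$; $\mathcal{I}_u$ is the set of represented triples; $\mathcal{I}_{\mathcal{G}}$ is the set of triples $\langle A,B|C\rangle$ with $A$ and $B$ m-separated by $C$. *)

theory Defs
  imports Main
begin

text \<open>A mixed graph on a finite vertex set V is given by a set D of directed
edges (p,c) meaning p -> c, and a symmetric set B of bidirected edges
(x,y) meaning x <-> y.\<close>

datatype 'a edge = Dir 'a 'a | Bi 'a 'a

definition edge_in :: "('a \<times> 'a) set \<Rightarrow> ('a \<times> 'a) set \<Rightarrow> 'a edge \<Rightarrow> bool" where
  "edge_in D B e = (case e of Dir x y \<Rightarrow> (x, y) \<in> D | Bi x y \<Rightarrow> (x, y) \<in> B)"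

definition connects :: "'a edge \<Rightarrow> 'a \<Rightarrow> 'a \<Rightarrow> bool" where
  "connects e u v = (case e of Dir x y \<Rightarrow> (x = u \<and> y = v) \<or> (x = v \<and> y = u)
                              | Bi x y \<Rightarrow> (x = u \<and> y = v) \<or> (x = v \<and> y = u))"

definition arrowhead_at :: "'a edge \<Rightarrow> 'a \<Rightarrow> bool" where
  "arrowhead_at e v = (case e of Dir x y \<Rightarrow> v = y | Bi x y \<Rightarrow> v = x \<or> v = y)"

definition anc :: "('a \<times> 'a) set \<Rightarrow> 'a set \<Rightarrow> 'a set" where
  "anc D S = {x. \<exists>s\<in>S. (x, s) \<in> D\<^sup>*}"

definition desc :: "('a \<times> 'a) set \<Rightarrow> 'a \<Rightarrow> 'a set" where
  "desc D w = {x. (w, x) \<in> D\<^sup>*}"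

definition pa :: "('a \<times> 'a) set \<Rightarrow> 'a set \<Rightarrow> 'a set" where
  "pa D S = {p. \<exists>s\<in>S. (p, s) \<in> D}"

definition sib :: "('a \<times> 'a) set \<Rightarrow> 'a \<Rightarrow> 'a set" where
  "sib B v = {w. (v, w) \<in> B}"

definition adjacent :: "('a \<times> 'a) set \<Rightarrow> ('a \<times> 'a) set \<Rightarrow> 'a \<Rightarrow> 'a \<Rightarrow> bool" where
  "adjacent D B a b = ((a, b) \<in> D \<or> (b, a) \<in> D \<or> (a, b) \<in> B \<or> (b, a) \<in> B)"

definition is_path :: "('a \<times> 'a) set \<Rightarrow> ('a \<times> 'a) set \<Rightarrow> 'a \<Rightarrow> 'a \<Rightarrow> 'a list \<Rightarrow> 'a edge list \<Rightarrow> bool" where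
  "is_path D B a b vs es =
     (vs \<noteq> [] \<and> hd vs = a \<and> last vs = b \<and> distinct vs \<and> length es + 1 = length vs \<and>
      (\<forall>i < length es. edge_in D B (es ! i) \<and> connects (es ! i) (vs ! i) (vs ! Suc i)))"

definition collider :: "'a list \<Rightarrow> 'a edge list \<Rightarrow> nat \<Rightarrow> bool" where
  "collider vs es i = (arrowhead_at (es ! (i - 1)) (vs ! i) \<and> arrowhead_at (es ! i) (vs ! i))"

definition m_connecting :: "('a \<times> 'a) set \<Rightarrow> ('a \<times> 'a) set \<Rightarrow> 'a set \<Rightarrow> 'a list \<Rightarrow> 'a edge list \<Rightarrow> bool" where
  "m_connecting D B C vs es =
     (\<forall>i. 0 < i \<and> i < length es \<longrightarrow>
        (collider vs es i \<longrightarrow> vs ! i \<in> anc D C) \<and>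
        (\<not> collider vs es i \<longrightarrow> vs ! i \<notin> C))"

definition m_separated :: "('a \<times> 'a) set \<Rightarrow> ('a \<times> 'a) set \<Rightarrow> 'a set \<Rightarrow> 'a set \<Rightarrow> 'a set \<Rightarrow> bool" where
  "m_separated D B A A' C =
     (\<forall>a\<in>A. \<forall>b\<in>A'. \<forall>vs es. is_path D B a b vs es \<longrightarrow> \<not> m_connecting D B C vs es)"

definition MAG :: "'a set \<Rightarrow> ('a \<times> 'a) set \<Rightarrow> ('a \<times> 'a) set \<Rightarrow> bool" where
  "MAG V D B =
     (finite V \<and> D \<subseteq> V \<times> V \<and> B \<subseteq> V \<times> V \<and> sym B \<and>
      acyclic D \<and>
      (\<forall>v\<in>V. sib B v \<inter> anc D {v} = {}) \<and>
      (\<forall>a\<in>V. \<forall>b\<in>V. a \<noteq> b \<and> \<not> adjacent D B a b \<longrightarrow>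
          (\<exists>C \<subseteq> V - {a, b}. m_separated D B {a} {b} C)))"

definition barren :: "('a \<times> 'a) set \<Rightarrow> 'a set \<Rightarrow> 'a set" where
  "barren D W = {w\<in>W. desc D w \<inter> W = {w}}"

definition district :: "('a \<times> 'a) set \<Rightarrow> 'a set \<Rightarrow> 'a \<Rightarrow> 'a set" where
  "district B W x = {y\<in>W. (x, y) \<in> (B \<inter> (W \<times> W))\<^sup>*}"

definition dis_of :: "('a \<times> 'a) set \<Rightarrow> 'a set \<Rightarrow> 'a set \<Rightarrow> 'a set" where
  "dis_of B W H = (\<Union>h\<in>H. district B W h)"

definition is_head :: "'a set \<Rightarrow> ('a \<times> 'a) set \<Rightarrow> ('a \<times> 'a) set \<Rightarrow> 'a set \<Rightarrow> bool" where
  "is_head V D B H =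
     (H \<noteq> {} \<and> H \<subseteq> V \<and> barren D H = H \<and>
      (\<exists>x\<in>H. H \<subseteq> district B (anc D H) x))"

definition tail :: "('a \<times> 'a) set \<Rightarrow> ('a \<times> 'a) set \<Rightarrow> 'a set \<Rightarrow> 'a set" where
  "tail D B H = (dis_of B (anc D H) H - H) \<union> pa D (dis_of B (anc D H) H)"

definition S_sets :: "'a set \<Rightarrow> ('a \<times> 'a) set \<Rightarrow> ('a \<times> 'a) set \<Rightarrow> 'a set set" where
  "S_sets V D B = {H \<union> A | H A. is_head V D B H \<and> A \<subseteq> tail D B H}"

type_synonym 'a imset = "'a set \<Rightarrow> int"

definition delta :: "'a set \<Rightarrow> 'a imset" where
  "delta X = (\<lambda>S. if S = X then 1 else 0)"

definition semi_imset :: "'a set \<Rightarrow> 'a set \<Rightarrow> 'a set \<Rightarrow> 'a imset" where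
  "semi_imset A A' C = (\<lambda>S. delta (A \<union> A' \<union> C) S - delta (A \<union> C) S - delta (A' \<union> C) S + delta C S)"

definition elem_triples :: "'a set \<Rightarrow> ('a \<times> 'a \<times> 'a set) set" where
  "elem_triples V = {(a, b, C). a \<in> V \<and> b \<in> V \<and> a \<noteq> b \<and> C \<subseteq> V - {a, b}}"

definition elem_imset :: "'a \<times> 'a \<times> 'a set \<Rightarrow> 'a imset" where
  "elem_imset t = (case t of (a, b, C) \<Rightarrow> semi_imset {a} {b} C)"

definition combinatorial :: "'a set \<Rightarrow> 'a imset \<Rightarrow> bool" where
  "combinatorial V u =
     (\<exists>k :: 'a \<times> 'a \<times> 'a set \<Rightarrow> nat.
        \<forall>S. u S = (\<Sum>t\<in>elem_triples V. int (k t) * elem_imset t S))"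

definition structural :: "'a set \<Rightarrow> 'a imset \<Rightarrow> bool" where
  "structural V u = (\<exists>n::nat. n > 0 \<and> combinatorial V (\<lambda>S. int n * u S))"

definition disjoint_triple :: "'a set \<Rightarrow> 'a set \<Rightarrow> 'a set \<Rightarrow> 'a set \<Rightarrow> bool" where
  "disjoint_triple V A A' C =
     (A \<subseteq> V \<and> A' \<subseteq> V \<and> C \<subseteq> V \<and> A \<inter> A' = {} \<and> A \<inter> C = {} \<and> A' \<inter> C = {})"

definition represented :: "'a set \<Rightarrow> 'a imset \<Rightarrow> 'a set \<Rightarrow> 'a set \<Rightarrow> 'a set \<Rightarrow> bool" where
  "represented V u A A' C =
     (\<exists>k::nat. combinatorial V (\<lambda>S. int k * u S - semi_imset A A' C S))"

definition I_imset :: "'a set \<Rightarrow> 'a imset \<Rightarrow> ('a set \<times> 'a set \<times> 'a set) set" where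
  "I_imset V u = {(A, A', C). disjoint_triple V A A' C \<and> represented V u A A' C}"

definition I_graph :: "'a set \<Rightarrow> ('a \<times> 'a) set \<Rightarrow> ('a \<times> 'a) set \<Rightarrow> ('a set \<times> 'a set \<times> 'a set) set" where
  "I_graph V D B = {(A, A', C). disjoint_triple V A A' C \<and> m_separated D B A A' C}"

definition char_imset :: "'a set \<Rightarrow> 'a imset \<Rightarrow> 'a imset" where
  "char_imset V u = (\<lambda>S. 1 - (\<Sum>T\<in>{T. S \<subseteq> T \<and> T \<subseteq> V}. u T))"

end

(* Let c = 1 - U, where U(S) is the sum of u over the supersets of S in V. For an elementary
   imset u<a,b|C> the upper sum U(S) is 1 if a, b \<in> S \<subseteq> {a,b} \<union> C and 0 otherwise, so upper
   sums of combinatorial imsets are nonnegative.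
   If S = H \<union> A lies in S(G), then for any a, b \<in> S and C \<supseteq> S - {a,b} there is a path from a to
   b, through the district of the head H in an(H), whose interior vertices are colliders in
   an({a,b} \<union> C); such a path can be turned into an m-connecting one given C. So no elementary
   imset of a decomposition of n u covers S, and U(S) = 0.
   If S \<notin> S(G), let H be its barren subset. Either H is not a head, and two vertices of H lie
   in different districts of an(H), or some vertex of S lies outside H \<union> tail(H). In both
   cases a vertex h \<in> H and a vertex t \<in> S are m-separated by an(H) - {h,t}, since an
   m-connecting path would be a collider path inside an(H) starting at the barren vertex h,
   which only reaches the district of h and its parents. The elementary imset u<h,t|an(H) - {h,t}>
   covers S and is represented in u, which forces U(S) > 0. *)
theory Submission
  imports Defs
begin

lemma connects_sym: "connects e u v = connects e v u"
  by (cases e) (auto simp: connects_def)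

lemma edge_in_cases:
  assumes "edge_in D B e" "connects e u v" "u \<noteq> v" "sym B"
  shows "(arrowhead_at e u \<and> arrowhead_at e v \<and> (u, v) \<in> B) \<or>
         (\<not> arrowhead_at e u \<and> arrowhead_at e v \<and> (u, v) \<in> D) \<or>
         (arrowhead_at e u \<and> \<not> arrowhead_at e v \<and> (v, u) \<in> D)"
  using assms by (cases e) (auto simp: edge_in_def connects_def arrowhead_at_def sym_def)

lemma edge_in_Dir_if_no_arrowhead:
  assumes "edge_in D B e" "connects e u v" "\<not> arrowhead_at e u"
  shows "(u, v) \<in> D"
  using assms by (cases e) (auto simp: edge_in_def connects_def arrowhead_at_def)

lemma is_path_iff_nth:
  "is_path D B a b vs es \<longleftrightarrow>
     length vs = Suc (length es) \<and> vs ! 0 = a \<and> vs ! length es = b \<and> distinct vs \<and>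
     (\<forall>i<length es. edge_in D B (es ! i) \<and> connects (es ! i) (vs ! i) (vs ! Suc i))"
  unfolding is_path_def
  by (metis (no_types, lifting) One_nat_def add.commute diff_Suc_1 hd_conv_nth last_conv_nth
      length_0_conv nat.distinct(1) plus_1_eq_Suc)

lemma is_path_rev:
  assumes "is_path D B a b vs es"
  shows "is_path D B b a (rev vs) (rev es)"
proof -
  let ?n = "length es"
  have L: "length vs = Suc ?n" and d: "distinct vs" and ends: "vs ! 0 = a" "vs ! ?n = b"
    and E: "\<And>i. i < ?n \<Longrightarrow> edge_in D B (es ! i) \<and> connects (es ! i) (vs ! i) (vs ! Suc i)"
    using assms by (auto simp: is_path_iff_nth)
  show ?thesis unfolding is_path_iff_nth
  proof (intro conjI allI impI)
    show "length (rev vs) = Suc (length (rev es))" "distinct (rev vs)"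
      using L d by simp_all
    show "rev vs ! 0 = b" "rev vs ! length (rev es) = a"
      using L ends by (simp_all add: rev_nth)
    fix i
    assume i: "i < length (rev es)"
    then have "rev es ! i = es ! (?n - Suc i)" "rev vs ! i = vs ! Suc (?n - Suc i)"
      "rev vs ! Suc i = vs ! (?n - Suc i)"
      using L by (simp_all add: rev_nth Suc_diff_Suc)
    moreover have "?n - Suc i < ?n" using i by simp
    ultimately show "edge_in D B (rev es ! i)" "connects (rev es ! i) (rev vs ! i) (rev vs ! Suc i)"
      using E connects_sym by metis+
  qed
qed

lemma collider_rev:
  assumes "length vs = Suc (length es)" "0 < i" "i < length es"
  shows "collider (rev vs) (rev es) i = collider vs es (length es - i)"
proof -
  have "rev es ! (i - 1) = es ! (length es - i)" "rev es ! i = es ! (length es - i - 1)"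
    "rev vs ! i = vs ! (length es - i)"
    using assms by (simp_all add: rev_nth)
  then show ?thesis unfolding collider_def by auto
qed

lemma is_path_drop:
  assumes "is_path D B a b vs es" "j \<le> length es"
  shows "is_path D B (vs ! j) b (drop j vs) (drop j es)"
  using assms unfolding is_path_iff_nth by (auto simp: add.commute[of j])

lemma collider_drop:
  assumes "length vs = Suc (length es)" "j \<le> length es" "0 < p"
  shows "collider (drop j vs) (drop j es) p = collider vs es (j + p)"
  using assms unfolding collider_def by (simp add: Suc_diff_Suc)

lemma is_path_Cons_Dir:
  assumes "is_path D B c b vs es" "c' \<notin> set vs" "(c, c') \<in> D"
  shows "is_path D B c' b (c' # vs) (Dir c c' # es)"
  using assms unfolding is_path_iff_nth
  by (auto simp: edge_in_def connects_def nth_Cons split: nat.splits)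

lemma collider_Cons:
  "0 < p \<Longrightarrow> collider (x # vs) (e # es) (Suc p) = collider vs es p"
  by (cases p) (auto simp: collider_def)

lemma is_path_take:
  assumes "is_path D B a b vs es" "k \<le> length es"
  shows "is_path D B a (vs ! k) (take (Suc k) vs) (take k es)"
  using assms unfolding is_path_iff_nth by auto

lemma collider_take:
  "0 < p \<Longrightarrow> p < k \<Longrightarrow> collider (take (Suc k) vs) (take k es) p = collider vs es p"
  unfolding collider_def by auto

lemma is_path_snoc:
  assumes "is_path D B a y vs es" "z \<notin> set vs" "edge_in D B e" "connects e y z"
  shows "is_path D B a z (vs @ [z]) (es @ [e])"
  using assms unfolding is_path_iff_nth by (auto simp: nth_append less_Suc_eq)

lemma collider_snoc:
  assumes "length vs = Suc (length es)" "0 < p" "p < length es"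
  shows "collider (vs @ [z]) (es @ [e]) p = collider vs es p"
  using assms unfolding collider_def by (auto simp: nth_append)

lemma collider_snoc_last:
  assumes "length vs = Suc (length es)" "es \<noteq> []"
  shows "collider (vs @ [z]) (es @ [e]) (length es) \<longleftrightarrow>
           arrowhead_at (last es) (vs ! length es) \<and> arrowhead_at e (vs ! length es)"
  using assms unfolding collider_def by (auto simp: nth_append last_conv_nth)

section \<open>From ancestral colliders to m-connecting paths\<close>

text \<open>The set Bd only serves as a termination measure: it bounds the colliders outside an(Z),
which are then bypassed one at a time.\<close>

definition weakly_m_connecting ::
  "('a \<times> 'a) set \<Rightarrow> 'a set \<Rightarrow> 'a set \<Rightarrow> 'a set \<Rightarrow> 'a list \<Rightarrow> 'a edge list \<Rightarrow> bool" where
  "weakly_m_connecting D Z M Bd vs es =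
     (\<forall>i. 0 < i \<and> i < length es \<longrightarrow>
        (collider vs es i \<longrightarrow> vs ! i \<in> M \<and> (vs ! i \<notin> anc D Z \<longrightarrow> vs ! i \<in> Bd)) \<and>
        (\<not> collider vs es i \<longrightarrow> vs ! i \<notin> Z))"

lemma weakly_m_connecting_rev:
  assumes "weakly_m_connecting D Z M Bd vs es" "length vs = Suc (length es)"
  shows "weakly_m_connecting D Z M Bd (rev vs) (rev es)"
  unfolding weakly_m_connecting_def
proof (intro allI impI)
  fix i
  assume i: "0 < i \<and> i < length (rev es)"
  then have "collider (rev vs) (rev es) i = collider vs es (length es - i)"
    "rev vs ! i = vs ! (length es - i)"
    using collider_rev assms(2) by (auto simp: rev_nth)
  moreover have "0 < length es - i" "length es - i < length es" using i by auto
  ultimately show "(collider (rev vs) (rev es) i \<longrightarrow>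
          rev vs ! i \<in> M \<and> (rev vs ! i \<notin> anc D Z \<longrightarrow> rev vs ! i \<in> Bd)) \<and>
        (\<not> collider (rev vs) (rev es) i \<longrightarrow> rev vs ! i \<notin> Z)"
    using assms(1) unfolding weakly_m_connecting_def by metis
qed

lemma weakly_m_connecting_Cons_Dir:
  assumes "weakly_m_connecting D Z M Bd vs es" "vs \<noteq> []" "vs ! 0 = x" "x \<noteq> y" "x \<notin> Z"
  shows "weakly_m_connecting D Z M Bd (y # vs) (Dir x y # es)"
  unfolding weakly_m_connecting_def
proof (intro allI impI)
  fix i
  assume i: "0 < i \<and> i < length (Dir x y # es)"
  then obtain p where p: "i = Suc p" by (cases i) auto
  show "(collider (y # vs) (Dir x y # es) i \<longrightarrow>
          (y # vs) ! i \<in> M \<and> ((y # vs) ! i \<notin> anc D Z \<longrightarrow> (y # vs) ! i \<in> Bd)) \<and>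
        (\<not> collider (y # vs) (Dir x y # es) i \<longrightarrow> (y # vs) ! i \<notin> Z)"
  proof (cases "p = 0")
    case True
    then show ?thesis using assms p by (simp add: collider_def arrowhead_at_def)
  next
    case False
    then show ?thesis
      using assms(1) p i collider_Cons[of p y vs "Dir x y" es]
      unfolding weakly_m_connecting_def by auto
  qed
qed

lemma weakly_m_connecting_drop:
  assumes "weakly_m_connecting D Z M Bd vs es" "length vs = Suc (length es)" "distinct vs"
    and "i \<le> j" "j \<le> length es"
  shows "weakly_m_connecting D Z M (Bd - {vs ! i}) (drop j vs) (drop j es)"
  unfolding weakly_m_connecting_def
proof (intro allI impI)
  fix p
  assume p: "0 < p \<and> p < length (drop j es)"
  have "collider (drop j vs) (drop j es) p = collider vs es (j + p)"
    using collider_drop assms(2,5) p by auto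
  moreover have "drop j vs ! p = vs ! (j + p)" using assms(2,5) by simp
  moreover have "vs ! (j + p) \<noteq> vs ! i"
    using nth_eq_iff_index_eq[OF assms(3)] p assms(2,4,5) by auto
  moreover have "0 < j + p \<and> j + p < length es" using p assms(5) by auto
  ultimately show "(collider (drop j vs) (drop j es) p \<longrightarrow> drop j vs ! p \<in> M \<and>
          (drop j vs ! p \<notin> anc D Z \<longrightarrow> drop j vs ! p \<in> Bd - {vs ! i})) \<and>
        (\<not> collider (drop j vs) (drop j es) p \<longrightarrow> drop j vs ! p \<notin> Z)"
    using assms(1) unfolding weakly_m_connecting_def by auto
qed

text \<open>dchain D x ys z: a directed chain x \<rightarrow> ys ! 0 \<rightarrow> ... \<rightarrow> z, where ys lists the vertices after x
(ys = [] for the trivial chain, where z = x).\<close>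

inductive dchain :: "('a \<times> 'a) set \<Rightarrow> 'a \<Rightarrow> 'a list \<Rightarrow> 'a \<Rightarrow> bool" for D where
  dchain_Nil: "dchain D x [] x"
| dchain_Cons: "(x, y) \<in> D \<Longrightarrow> dchain D y ys z \<Longrightarrow> dchain D x (y # ys) z"

lemma dchain_rtrancl: "dchain D x ys z \<Longrightarrow> (x, z) \<in> D\<^sup>* \<and> (\<forall>w\<in>set ys. (x, w) \<in> D\<^sup>*)"
  by (induction rule: dchain.induct) (auto intro: converse_rtrancl_into_rtrancl)

lemma dchain_suffix: "dchain D y (p @ w # q) z \<Longrightarrow> dchain D w q z"
  by (induction p arbitrary: y) (auto elim: dchain.cases)

lemma dchain_if_rtrancl: "(x, z) \<in> D\<^sup>* \<Longrightarrow> \<exists>ys. dchain D x ys z \<and> distinct (x # ys)"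
proof (induction rule: converse_rtrancl_induct)
  case base
  show ?case by (auto intro: dchain_Nil)
next
  case (step x y)
  then obtain ys where ys: "dchain D y ys z" "distinct (y # ys)" by blast
  show ?case
  proof (cases "x \<in> set (y # ys)")
    case True
    then consider "x = y" | p q where "ys = p @ x # q" by (meson set_ConsD split_list)
    then show ?thesis
    proof cases
      case 1
      then show ?thesis using ys by blast
    next
      case 2
      then show ?thesis using ys dchain_suffix[of D y p x q z] by auto
    qed
  next
    case False
    then show ?thesis using ys step(1) by (auto intro: dchain_Cons)
  qed
qed

lemma dchain_last_exit:
  assumes "dchain D x ys a" "distinct ys" "set (x # ys) \<inter> X \<noteq> {}"
  shows "\<exists>y ys'. y \<in> X \<and> (x, y) \<in> D\<^sup>* \<and> dchain D y ys' a \<and> distinct ys' \<and> set ys' \<inter> X = {}"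
  using assms
proof (induction rule: dchain.induct)
  case (dchain_Nil x)
  then show ?case by (intro exI[of _ x] exI[of _ "[]"]) (auto intro: dchain.dchain_Nil)
next
  case (dchain_Cons x y ys z)
  show ?case
  proof (cases "set (y # ys) \<inter> X = {}")
    case True
    then show ?thesis
      using dchain_Cons by (intro exI[of _ x] exI[of _ "y # ys"]) (auto intro: dchain.dchain_Cons)
  next
    case False
    then show ?thesis using dchain_Cons by (auto intro: converse_rtrancl_into_rtrancl)
  qed
qed

lemma weakly_m_connecting_prepend_dchain:
  "dchain D c ys a \<Longrightarrow> is_path D B c b vs es \<Longrightarrow> weakly_m_connecting D Z M Bd vs es
   \<Longrightarrow> set ys \<inter> set vs = {} \<Longrightarrow> distinct ys \<Longrightarrow> c \<notin> Z \<Longrightarrow> set ys \<inter> Z = {}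
   \<Longrightarrow> \<exists>vs' es'. is_path D B a b vs' es' \<and> weakly_m_connecting D Z M Bd vs' es'"
proof (induction c ys a arbitrary: vs es rule: dchain.induct)
  case (dchain_Nil x)
  then show ?case by blast
next
  case (dchain_Cons x y ys z)
  have "y \<notin> set vs" using dchain_Cons.prems(3) by auto
  then have P: "is_path D B y b (y # vs) (Dir x y # es)"
    using is_path_Cons_Dir dchain_Cons.prems(1) dchain_Cons.hyps(1) by metis
  have "vs \<noteq> []" "vs ! 0 = x" using dchain_Cons.prems(1) by (auto simp: is_path_def hd_conv_nth)
  moreover have "x \<noteq> y" using \<open>y \<notin> set vs\<close> calculation by (cases vs) auto
  ultimately have "weakly_m_connecting D Z M Bd (y # vs) (Dir x y # es)"
    using weakly_m_connecting_Cons_Dir dchain_Cons.prems(2,5) by metis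
  then show ?case using dchain_Cons.IH[OF P] dchain_Cons.prems by auto
qed

text \<open>A collider x \<notin> an(Z) that is an ancestor of the endpoint a is bypassed by following a
directed chain from a up to the last descendant of x on the path after x; the chain vertices
are descendants of x, hence not in Z, and they are noncolliders of the new path.\<close>

lemma weakly_m_connecting_bypass_collider:
  assumes P: "is_path D B a b vs es" and W: "weakly_m_connecting D Z M Bd vs es"
    and i: "0 < i" "i < length es" and x_not_anc: "vs ! i \<notin> anc D Z"
    and x_anc_a: "(vs ! i, a) \<in> D\<^sup>*"
  shows "\<exists>vs' es'. is_path D B a b vs' es' \<and> weakly_m_connecting D Z M (Bd - {vs ! i}) vs' es'"
proof -
  define x where "x = vs ! i"
  have L: "length vs = Suc (length es)" and dv: "distinct vs" using P by (auto simp: is_path_iff_nth)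
  from dchain_if_rtrancl[OF x_anc_a[folded x_def]]
  obtain ys0 where ys0: "dchain D x ys0 a" "distinct (x # ys0)" by blast
  have "x \<in> set (drop i vs)"
    unfolding x_def using i L by (metis Cons_nth_drop_Suc less_Suc_eq list.set_intros(1))
  then have "set (x # ys0) \<inter> set (drop i vs) \<noteq> {}" by auto
  moreover have "distinct ys0" using ys0(2) by simp
  ultimately obtain y ys where y: "y \<in> set (drop i vs)" "(x, y) \<in> D\<^sup>*" "dchain D y ys a"
    "distinct ys" "set ys \<inter> set (drop i vs) = {}"
    using dchain_last_exit[OF ys0(1)] by blast
  from y(1) obtain k where k: "k < length (drop i vs)" "drop i vs ! k = y"
    by (auto simp: in_set_conv_nth)
  define j where "j = i + k"
  have j: "i \<le> j" "j \<le> length es" "vs ! j = y" using k L i unfolding j_def by auto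
  have notZ: "w \<notin> Z" if "(x, w) \<in> D\<^sup>*" for w
    using x_not_anc that unfolding x_def anc_def by auto
  have "is_path D B y b (drop j vs) (drop j es)" using is_path_drop[OF P j(2)] j(3) by simp
  moreover have "weakly_m_connecting D Z M (Bd - {x}) (drop j vs) (drop j es)"
    unfolding x_def using weakly_m_connecting_drop[OF W L dv j(1,2)] .
  moreover have "set ys \<inter> set (drop j vs) = {}"
    using y(5) set_drop_subset_set_drop[OF j(1), of vs] by auto
  moreover have "set ys \<inter> Z = {}"
    using dchain_rtrancl[OF y(3)] y(2) notZ by (blast intro: rtrancl_trans)
  ultimately have "\<exists>vs' es'. is_path D B a b vs' es' \<and> weakly_m_connecting D Z M (Bd - {x}) vs' es'"
    using weakly_m_connecting_prepend_dchain[OF y(3)] y(4) notZ[OF y(2)] by blast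
  then show ?thesis by (simp only: x_def)
qed

lemma weakly_m_connecting_bypass_collider_anc:
  assumes P: "is_path D B a b vs es" and W: "weakly_m_connecting D Z M Bd vs es"
    and i: "0 < i" "i < length es" and x_not_anc: "vs ! i \<notin> anc D Z"
    and x_anc: "(vs ! i, a) \<in> D\<^sup>* \<or> (vs ! i, b) \<in> D\<^sup>*"
  shows "\<exists>vs' es'. is_path D B a b vs' es' \<and> weakly_m_connecting D Z M (Bd - {vs ! i}) vs' es'"
  using x_anc
proof
  assume "(vs ! i, a) \<in> D\<^sup>*"
  then show ?thesis using weakly_m_connecting_bypass_collider[OF P W i x_not_anc] by blast
next
  assume x_anc_b: "(vs ! i, b) \<in> D\<^sup>*"
  have L: "length vs = Suc (length es)" using P by (simp add: is_path_iff_nth)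
  have "rev vs ! (length es - i) = vs ! i" using i L by (simp add: rev_nth)
  moreover have "0 < length es - i" "length es - i < length (rev es)" using i by auto
  ultimately obtain vs1 es1 where P1: "is_path D B b a vs1 es1"
    and W1: "weakly_m_connecting D Z M (Bd - {vs ! i}) vs1 es1"
    using weakly_m_connecting_bypass_collider[OF is_path_rev[OF P] weakly_m_connecting_rev[OF W L]]
      x_not_anc x_anc_b by metis
  have "length vs1 = Suc (length es1)" using P1 by (simp add: is_path_iff_nth)
  then show ?thesis using is_path_rev[OF P1] weakly_m_connecting_rev[OF W1] by blast
qed

lemma m_connecting_path_if_weakly_m_connecting:
  assumes "finite Bd" "is_path D B a b vs es"
    and "weakly_m_connecting D Z (anc D (insert a (insert b Z))) Bd vs es"
  shows "\<exists>vs' es'. is_path D B a b vs' es' \<and> m_connecting D B Z vs' es'"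
  using assms
proof (induction "card Bd" arbitrary: Bd vs es rule: less_induct)
  case less
  show ?case
  proof (cases "\<exists>i. 0 < i \<and> i < length es \<and> collider vs es i \<and> vs ! i \<notin> anc D Z")
    case False
    then have "m_connecting D B Z vs es"
      using less.prems(3) unfolding weakly_m_connecting_def m_connecting_def by blast
    then show ?thesis using less.prems(2) by blast
  next
    case True
    then obtain i where i: "0 < i" "i < length es" "collider vs es i" "vs ! i \<notin> anc D Z" by blast
    then have "vs ! i \<in> anc D (insert a (insert b Z))" "vs ! i \<in> Bd"
      using less.prems(3) unfolding weakly_m_connecting_def by auto
    then have "(vs ! i, a) \<in> D\<^sup>* \<or> (vs ! i, b) \<in> D\<^sup>*" using i(4) unfolding anc_def by auto
    then obtain vs' es' where "is_path D B a b vs' es'"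
      "weakly_m_connecting D Z (anc D (insert a (insert b Z))) (Bd - {vs ! i}) vs' es'"
      using weakly_m_connecting_bypass_collider_anc[OF less.prems(2,3) i(1,2,4)] by blast
    moreover have "card (Bd - {vs ! i}) < card Bd"
      using \<open>vs ! i \<in> Bd\<close> less.prems(1) by (meson card_Diff1_less)
    ultimately show ?thesis using less.hyps less.prems(1) by blast
  qed
qed

section \<open>Collider paths through a district\<close>

definition collider_path ::
  "('a \<times> 'a) set \<Rightarrow> ('a \<times> 'a) set \<Rightarrow> 'a set \<Rightarrow> 'a \<Rightarrow> 'a \<Rightarrow> 'a list \<Rightarrow> 'a edge list \<Rightarrow> bool" where
  "collider_path D B M a y vs es =
     (is_path D B a y vs es \<and> (\<forall>i. 0 < i \<and> i < length es \<longrightarrow> collider vs es i \<and> vs ! i \<in> M))"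

lemma collider_path_set_subset:
  assumes "collider_path D B M a b vs es" "a \<in> M" "b \<in> M"
  shows "set vs \<subseteq> M"
proof
  fix v
  assume "v \<in> set vs"
  moreover have "length vs = Suc (length es)" and ends: "vs ! 0 = a" "vs ! length es = b"
    using assms(1) unfolding collider_path_def is_path_iff_nth by auto
  ultimately obtain i where "i \<le> length es" "v = vs ! i" by (metis in_set_conv_nth less_Suc_eq_le)
  then show "v \<in> M"
    using assms ends unfolding collider_path_def by (cases "i = 0"; cases "i = length es") auto
qed

lemma collider_path_weakly_m_connecting:
  "collider_path D B M a b vs es \<Longrightarrow> weakly_m_connecting D Z M (set vs) vs es"
  unfolding collider_path_def weakly_m_connecting_def is_path_iff_nth by auto

lemma collider_path_take:
  assumes C: "collider_path D B M a y vs es" and into_y: "es \<noteq> [] \<longrightarrow> arrowhead_at (last es) y"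
    and k: "k \<le> length es"
  shows "collider_path D B M a (vs ! k) (take (Suc k) vs) (take k es) \<and>
           (take k es \<noteq> [] \<longrightarrow> arrowhead_at (last (take k es)) (vs ! k))"
proof -
  have P: "is_path D B a y vs es"
    and I: "\<forall>i. 0 < i \<and> i < length es \<longrightarrow> collider vs es i \<and> vs ! i \<in> M"
    using C unfolding collider_path_def by auto
  have "collider_path D B M a (vs ! k) (take (Suc k) vs) (take k es)"
    unfolding collider_path_def using is_path_take[OF P k] k I collider_take[of _ k vs es] by auto
  moreover have "arrowhead_at (last (take k es)) (vs ! k)" if ne: "take k es \<noteq> []"
  proof (cases "k = length es")
    case True
    then show ?thesis using into_y ne P by (auto simp: is_path_iff_nth)
  next
    case False
    then have "k < length es" "0 < k" using k ne by auto
    then have "collider vs es k" using I by blast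
    moreover have "last (take k es) = es ! (k - 1)"
      using ne \<open>k < length es\<close> by (simp add: last_conv_nth)
    ultimately show ?thesis unfolding collider_def by simp
  qed
  ultimately show ?thesis by blast
qed

text \<open>If z is already on the path, the path is cut back to z; the arrowhead into the endpoint
survives because every interior vertex is a collider.\<close>

lemma collider_path_extend:
  assumes C: "collider_path D B M a y vs es" and into_y: "es \<noteq> [] \<longrightarrow> arrowhead_at (last es) y"
    and e: "edge_in D B e" "connects e y z" and ey: "es \<noteq> [] \<longrightarrow> arrowhead_at e y \<and> y \<in> M"
  shows "\<exists>vs' es'. collider_path D B M a z vs' es' \<and>
           (arrowhead_at e z \<longrightarrow> es' \<noteq> [] \<longrightarrow> arrowhead_at (last es') z)"
proof -
  have P: "is_path D B a y vs es"
    and I: "\<forall>i. 0 < i \<and> i < length es \<longrightarrow> collider vs es i \<and> vs ! i \<in> M"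
    using C unfolding collider_path_def by auto
  have L: "length vs = Suc (length es)" and vy: "vs ! length es = y" using P by (auto simp: is_path_iff_nth)
  show ?thesis
  proof (cases "z \<in> set vs")
    case True
    then obtain k where "k \<le> length es" "vs ! k = z" using L by (metis in_set_conv_nth less_Suc_eq_le)
    then show ?thesis using collider_path_take[OF C into_y] by blast
  next
    case False
    have "collider_path D B M a z (vs @ [z]) (es @ [e])"
      unfolding collider_path_def
    proof (rule conjI[OF is_path_snoc[OF P False e]], intro allI impI)
      fix p
      assume p: "0 < p \<and> p < length (es @ [e])"
      show "collider (vs @ [z]) (es @ [e]) p \<and> (vs @ [z]) ! p \<in> M"
      proof (cases "p < length es")
        case True
        then show ?thesis using collider_snoc[OF L] I p L by (auto simp: nth_append)
      next
        case False
        then have "p = length es" "es \<noteq> []" using p by auto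
        then show ?thesis using collider_snoc_last[OF L] into_y ey vy L by (auto simp: nth_append)
      qed
    qed
    then show ?thesis by (intro exI[of _ "vs @ [z]"] exI[of _ "es @ [e]"]) simp
  qed
qed

lemma collider_path_bidirected_chain:
  assumes "(d, d') \<in> (B \<inter> W \<times> W)\<^sup>*" "W \<subseteq> M" "d \<in> W"
    and "collider_path D B M a d vs es" "es \<noteq> [] \<longrightarrow> arrowhead_at (last es) d"
  shows "\<exists>vs' es'. collider_path D B M a d' vs' es' \<and> (es' \<noteq> [] \<longrightarrow> arrowhead_at (last es') d')"
  using assms(1,4,5)
proof (induction rule: rtrancl_induct)
  case base
  then show ?case by blast
next
  case (step y z)
  then obtain vs1 es1 where C1: "collider_path D B M a y vs1 es1"
    and into: "es1 \<noteq> [] \<longrightarrow> arrowhead_at (last es1) y"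
    by blast
  have "y \<in> M" using step.hyps(2) assms(2) by auto
  moreover have "edge_in D B (Bi y z)" "connects (Bi y z) y z"
    using step.hyps(2) by (auto simp: edge_in_def connects_def)
  ultimately show ?case
    using collider_path_extend[OF C1 into, of "Bi y z" z] by (simp add: arrowhead_at_def)
qed

text \<open>The collider path a \<rightarrow> d \<leftrightarrow> ... \<leftrightarrow> d' \<leftarrow> b, where the directed end edges are absent when
a = d or b = d'.\<close>

lemma collider_path_through_bidirected_chain:
  assumes "(d, d') \<in> (B \<inter> W \<times> W)\<^sup>*" "W \<subseteq> M" "d \<in> W"
    and "a = d \<or> (a, d) \<in> D" "b = d' \<or> (b, d') \<in> D"
  shows "\<exists>vs es. collider_path D B M a b vs es"
proof -
  have "collider_path D B M a a [a] []" unfolding collider_path_def is_path_def by auto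
  then obtain vs1 es1 where "collider_path D B M a d vs1 es1" "es1 \<noteq> [] \<longrightarrow> arrowhead_at (last es1) d"
    using assms(4) collider_path_extend[of D B M a a "[a]" "[]" "Dir a d" d]
    by (auto simp: edge_in_def connects_def arrowhead_at_def)
  then obtain vs2 es2 where C2: "collider_path D B M a d' vs2 es2"
    and into: "es2 \<noteq> [] \<longrightarrow> arrowhead_at (last es2) d'"
    using collider_path_bidirected_chain assms(1-3) by metis
  have "d' \<in> W" using assms(1,3) by (induction rule: rtrancl_induct) auto
  then show ?thesis
    using assms(2,5) C2 into collider_path_extend[OF C2 into, of "Dir b d'" b]
    by (auto simp: edge_in_def connects_def arrowhead_at_def)
qed

lemma dis_of_bidirected_connected:
  assumes "sym B" "H \<subseteq> district B W x" "d \<in> dis_of B W H" "d' \<in> dis_of B W H"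
  shows "(d, d') \<in> (B \<inter> W \<times> W)\<^sup>*"
proof -
  let ?R = "B \<inter> W \<times> W"
  have sym: "sym (?R\<^sup>*)" using assms(1) by (intro sym_rtrancl) (auto simp: sym_def)
  obtain h h' where "h \<in> H" "(h, d) \<in> ?R\<^sup>*" "h' \<in> H" "(h', d') \<in> ?R\<^sup>*"
    using assms(3,4) unfolding dis_of_def district_def by blast
  moreover have "(x, h) \<in> ?R\<^sup>*" "(x, h') \<in> ?R\<^sup>*"
    using assms(2) calculation unfolding district_def by auto
  ultimately have "(d, h) \<in> ?R\<^sup>*" "(h, x) \<in> ?R\<^sup>*" "(x, h') \<in> ?R\<^sup>*" "(h', d') \<in> ?R\<^sup>*"
    using sym by (auto dest: symD)
  then show ?thesis by (meson rtrancl_trans)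
qed

lemma m_connecting_path_if_S_set:
  assumes "sym B" and S: "S \<in> S_sets V D B" and "a \<in> S" "b \<in> S" "S \<subseteq> insert a (insert b C)"
  shows "\<exists>vs es. is_path D B a b vs es \<and> m_connecting D B C vs es"
proof -
  obtain H A where HA: "S = H \<union> A" "is_head V D B H" "A \<subseteq> tail D B H"
    using S unfolding S_sets_def by blast
  define W where "W = anc D H"
  define M where "M = anc D (insert a (insert b C))"
  obtain x where "H \<subseteq> district B W x" using HA(2) unfolding is_head_def W_def by blast
  have attached: "\<exists>d\<in>dis_of B W H. s = d \<or> (s, d) \<in> D" if "s \<in> S" for s
  proof (cases "s \<in> H")
    case True
    then have "s \<in> district B W s" unfolding W_def district_def anc_def by auto
    then show ?thesis using True unfolding dis_of_def by blast
  next
    case False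
    then have "s \<in> tail D B H" using that HA by auto
    then show ?thesis unfolding tail_def W_def pa_def by auto
  qed
  obtain d d' where d: "d \<in> dis_of B W H" "a = d \<or> (a, d) \<in> D"
    and d': "d' \<in> dis_of B W H" "b = d' \<or> (b, d') \<in> D"
    using attached assms(3,4) by blast
  have "W \<subseteq> M" unfolding W_def M_def anc_def using HA(1) assms(5) by auto
  moreover have "dis_of B W H \<subseteq> W" unfolding dis_of_def district_def by auto
  ultimately obtain vs es where C: "collider_path D B M a b vs es"
    using collider_path_through_bidirected_chain[OF
        dis_of_bidirected_connected[OF assms(1) \<open>H \<subseteq> district B W x\<close> d(1) d'(1)]] d d'
    by blast
  then have "is_path D B a b vs es" by (simp add: collider_path_def)
  moreover have "weakly_m_connecting D C (anc D (insert a (insert b C))) (set vs) vs es"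
    using collider_path_weakly_m_connecting[OF C[unfolded M_def]] .
  ultimately show ?thesis by (rule m_connecting_path_if_weakly_m_connecting[OF finite_set])
qed

section \<open>Separation of sets outside S(G)\<close>

lemma anc_mono: "X \<subseteq> Y \<Longrightarrow> anc D X \<subseteq> anc D Y"
  unfolding anc_def by auto

lemma subset_anc: "X \<subseteq> anc D X"
  unfolding anc_def by auto

lemma anc_anc: "anc D (anc D X) = anc D X"
  unfolding anc_def by (auto intro: rtrancl_trans)

lemma anc_parent: "(x, y) \<in> D \<Longrightarrow> y \<in> anc D X \<Longrightarrow> x \<in> anc D X"
  unfolding anc_def by (auto intro: converse_rtrancl_into_rtrancl)

lemma anc_subset:
  assumes "D \<subseteq> V \<times> V" "X \<subseteq> V"
  shows "anc D X \<subseteq> V"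
proof
  fix x
  assume "x \<in> anc D X"
  then obtain s where s: "s \<in> X" "(x, s) \<in> D\<^sup>*" unfolding anc_def by auto
  from s(2) show "x \<in> V" using s(1) assms by (cases rule: converse_rtranclE) auto
qed

lemma barren_subset: "barren D S \<subseteq> S"
  unfolding barren_def by auto

lemma barren_barren: "barren D (barren D S) = barren D S"
  unfolding barren_def by auto

lemma subset_anc_barren:
  assumes "finite D" "acyclic D"
  shows "S \<subseteq> anc D (barren D S)"
proof
  fix s
  assume s: "s \<in> S"
  have "wf ((D\<^sup>+)\<inverse>)"
    using wf_trancl[OF finite_acyclic_wf_converse[OF assms]] by (simp add: trancl_converse)
  moreover have "s \<in> desc D s \<inter> S" using s unfolding desc_def by auto
  ultimately obtain m where m: "m \<in> desc D s \<inter> S" "\<And>y. (m, y) \<in> D\<^sup>+ \<Longrightarrow> y \<notin> desc D s \<inter> S"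
    using wfE_min by (metis converse_iff)
  then have sm: "(s, m) \<in> D\<^sup>*" unfolding desc_def by auto
  have "desc D m \<inter> S = {m}"
  proof
    show "desc D m \<inter> S \<subseteq> {m}"
    proof
      fix y
      assume y: "y \<in> desc D m \<inter> S"
      then have "(m, y) \<in> D\<^sup>*" unfolding desc_def by auto
      moreover from this have "y \<in> desc D s \<inter> S" using sm y unfolding desc_def by (auto intro: rtrancl_trans)
      ultimately show "y \<in> {m}" using m(2) by (auto simp: rtrancl_eq_or_trancl)
    qed
    show "{m} \<subseteq> desc D m \<inter> S" using m(1) unfolding desc_def by auto
  qed
  then have "m \<in> barren D S" using m(1) unfolding barren_def by auto
  then show "s \<in> anc D (barren D S)" using sm unfolding anc_def by auto
qed

lemma barren_no_child_in_anc:
  assumes "acyclic D" "barren D H = H" "h \<in> H" "w \<in> anc D H"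
  shows "(h, w) \<notin> D"
proof
  assume hw: "(h, w) \<in> D"
  obtain h' where h': "h' \<in> H" "(w, h') \<in> D\<^sup>*" using assms(4) unfolding anc_def by auto
  then have "(h, h') \<in> D\<^sup>+" using hw by (meson rtrancl_into_trancl2)
  moreover have "desc D h \<inter> H = {h}" using assms(2,3) unfolding barren_def by blast
  ultimately have "(h, h) \<in> D\<^sup>+" using h'(1) unfolding desc_def by auto
  then show False using assms(1) unfolding acyclic_def by auto
qed

lemma noncollider_child_on_path:
  assumes "is_path D B a b vs es" "0 < i" "i < length es" "\<not> collider vs es i"
  shows "\<exists>w\<in>set vs. (vs ! i, w) \<in> D"
proof -
  have L: "length vs = Suc (length es)"
    and E: "\<And>j. j < length es \<Longrightarrow> edge_in D B (es ! j) \<and> connects (es ! j) (vs ! j) (vs ! Suc j)"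
    using assms(1) by (auto simp: is_path_iff_nth)
  consider "\<not> arrowhead_at (es ! (i - 1)) (vs ! i)" | "\<not> arrowhead_at (es ! i) (vs ! i)"
    using assms(4) unfolding collider_def by auto
  then show ?thesis
  proof cases
    case 1
    have "i - 1 < length es" "Suc (i - 1) = i" using assms(2,3) by auto
    then have "connects (es ! (i - 1)) (vs ! i) (vs ! (i - 1))" "edge_in D B (es ! (i - 1))"
      using E[of "i - 1"] connects_sym by metis+
    then have "(vs ! i, vs ! (i - 1)) \<in> D" using 1 edge_in_Dir_if_no_arrowhead by metis
    then show ?thesis using L assms(3) by auto
  next
    case 2
    then have "(vs ! i, vs ! Suc i) \<in> D" using E[OF assms(3)] edge_in_Dir_if_no_arrowhead by metis
    then show ?thesis using L assms(3) by auto
  qed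
qed

text \<open>A vertex z of the path outside W without a child on the path outside W has no child on
the path at all, since W is ancestral; so z is a collider, hence in an(C) \<subseteq> W.\<close>

lemma m_connecting_path_within_ancestral:
  assumes "finite D" "acyclic D" and ancestral: "\<And>x y. (x, y) \<in> D \<Longrightarrow> y \<in> W \<Longrightarrow> x \<in> W"
    and "a \<in> W" "b \<in> W" "anc D C \<subseteq> W"
    and P: "is_path D B a b vs es" and MC: "m_connecting D B C vs es"
  shows "set vs \<subseteq> W"
proof (rule ccontr)
  assume "\<not> set vs \<subseteq> W"
  then obtain z0 where "z0 \<in> set vs - W" by auto
  then obtain z where z: "z \<in> set vs - W" and minimal: "\<And>y. (z, y) \<in> D \<Longrightarrow> y \<notin> set vs - W"
    using wfE_min[OF finite_acyclic_wf_converse[OF assms(1,2)]] by (metis converse_iff)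
  have L: "length vs = Suc (length es)" and ends: "vs ! 0 = a" "vs ! length es = b"
    using P by (auto simp: is_path_iff_nth)
  obtain i where i: "i < length vs" "vs ! i = z" using z by (meson DiffD1 in_set_conv_nth)
  have "0 < i" "i < length es" using i z L ends assms(4,5) by (auto intro: gr0I) (metis less_SucE)
  moreover have "\<not> collider vs es i"
    using MC calculation i z assms(6) unfolding m_connecting_def by auto
  ultimately obtain w where "w \<in> set vs" "(z, w) \<in> D"
    using noncollider_child_on_path[OF P] i(2) by metis
  then show False using minimal ancestral z by blast
qed

lemma collider_path_if_m_connecting_given_anc:
  assumes "finite D" "acyclic D" "a \<in> anc D H" "b \<in> anc D H"
    and P: "is_path D B a b vs es" and MC: "m_connecting D B (anc D H - {a, b}) vs es"
  shows "collider_path D B (anc D H) a b vs es"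
proof -
  have "anc D (anc D H - {a, b}) \<subseteq> anc D H"
    using anc_mono[of "anc D H - {a, b}" "anc D H" D] by (auto simp: anc_anc)
  moreover have "\<And>x y. (x, y) \<in> D \<Longrightarrow> y \<in> anc D H \<Longrightarrow> x \<in> anc D H" by (rule anc_parent)
  ultimately have inW: "set vs \<subseteq> anc D H"
    using m_connecting_path_within_ancestral[OF assms(1,2) _ assms(3,4) _ P MC] by blast
  have L: "length vs = Suc (length es)" and ends: "vs ! 0 = a" "vs ! length es = b"
    and dv: "distinct vs"
    using P by (auto simp: is_path_iff_nth)
  have "collider vs es i \<and> vs ! i \<in> anc D H" if i: "0 < i" "i < length es" for i
  proof -
    have "vs ! i \<in> anc D H" using inW i L by auto
    moreover have "vs ! i \<noteq> a" "vs ! i \<noteq> b"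
      using ends i L dv by (auto simp: nth_eq_iff_index_eq)
    ultimately show ?thesis using MC i unfolding m_connecting_def by auto
  qed
  then show ?thesis using P unfolding collider_path_def by blast
qed

text \<open>Walking along a collider path from a barren vertex h inside an(H), each edge but the last
must be bidirected: a tail at an interior vertex would contradict its being a collider, and
a tail at h would give h a child in an(H).\<close>

lemma collider_path_from_barren_step:
  assumes "sym B" "acyclic D" "barren D H = H" "h \<in> H" "t \<in> anc D H"
    and C: "collider_path D B (anc D H) h t vs es"
    and i: "i < length es" and vi: "vs ! i \<in> district B (anc D H) h"
  shows "vs ! Suc i \<in> district B (anc D H) h \<or>
           \<not> arrowhead_at (es ! i) (vs ! Suc i) \<and> (vs ! Suc i, vs ! i) \<in> D"
proof -
  have P: "is_path D B h t vs es" using C by (simp add: collider_path_def)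
  then have L: "length vs = Suc (length es)" and h0: "vs ! 0 = h" and "distinct vs"
    and E: "edge_in D B (es ! i)" "connects (es ! i) (vs ! i) (vs ! Suc i)"
    using i by (auto simp: is_path_iff_nth)
  have "set vs \<subseteq> anc D H" using collider_path_set_subset[OF C _ assms(5)] assms(4) subset_anc by fast
  then have inW: "vs ! Suc i \<in> anc D H" using i L by auto
  have "vs ! i \<noteq> vs ! Suc i" using \<open>distinct vs\<close> L i by (simp add: nth_eq_iff_index_eq)
  from edge_in_cases[OF E this assms(1)]
  consider "(vs ! i, vs ! Suc i) \<in> B"
    | "\<not> arrowhead_at (es ! i) (vs ! i)" "(vs ! i, vs ! Suc i) \<in> D"
    | "\<not> arrowhead_at (es ! i) (vs ! Suc i)" "(vs ! Suc i, vs ! i) \<in> D"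
    by blast
  then show ?thesis
  proof cases
    case 1
    then show ?thesis using vi inW unfolding district_def by (auto intro: rtrancl_into_rtrancl)
  next
    case 2
    show ?thesis
    proof (cases "i = 0")
      case True
      then show ?thesis using barren_no_child_in_anc[OF assms(2,3,4) inW] 2 h0 by auto
    next
      case False
      then show ?thesis using C i 2 unfolding collider_path_def collider_def by auto
    qed
  qed auto
qed

lemma collider_path_from_barren:
  assumes "sym B" "acyclic D" "barren D H = H" "h \<in> H" "t \<in> anc D H" "h \<noteq> t"
    and C: "collider_path D B (anc D H) h t vs es"
  shows "t \<in> district B (anc D H) h \<union> pa D (district B (anc D H) h)"
proof -
  note step = collider_path_from_barren_step[OF assms(1-5) C]
  have L: "length vs = Suc (length es)" and h0: "vs ! 0 = h" and tl: "vs ! length es = t"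
    using C unfolding collider_path_def is_path_iff_nth by auto
  have in_district: "vs ! i \<in> district B (anc D H) h" if "i < length es" for i
    using that
  proof (induction i)
    case 0
    then show ?case using h0 assms(4) subset_anc[of H D] unfolding district_def by auto
  next
    case (Suc i)
    then show ?case using step[of i] C unfolding collider_path_def collider_def by auto
  qed
  have "es \<noteq> []" using h0 tl assms(6) by auto
  then have "length es - 1 < length es" "Suc (length es - 1) = length es" by auto
  then show ?thesis
    using step[of "length es - 1"] in_district[of "length es - 1"] tl unfolding pa_def by auto
qed

lemma m_separated_if_outside_district:
  assumes "finite D" "acyclic D" "sym B" "barren D H = H" "h \<in> H" "t \<in> anc D H"
    and t: "t \<notin> district B (anc D H) h \<union> pa D (district B (anc D H) h)"
  shows "m_separated D B {h} {t} (anc D H - {h, t})"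
  unfolding m_separated_def
proof (intro ballI allI impI notI)
  fix h' t' vs es
  assume "h' \<in> {h}" "t' \<in> {t}" and P: "is_path D B h' t' vs es"
    and MC: "m_connecting D B (anc D H - {h, t}) vs es"
  then have P: "is_path D B h t vs es" by simp
  have "h \<in> anc D H" using assms(5) subset_anc by fast
  then have "h \<noteq> t" using t unfolding district_def by auto
  moreover have "collider_path D B (anc D H) h t vs es"
    using collider_path_if_m_connecting_given_anc[OF assms(1,2) \<open>h \<in> anc D H\<close> assms(6) P MC] .
  ultimately show False using collider_path_from_barren[OF assms(3,2,4,5,6)] t by blast
qed

lemma outside_district_pair_if_not_S_set:
  assumes "acyclic D" "S \<subseteq> V" "S \<notin> S_sets V D B" "H \<subseteq> S" "H \<noteq> {}" "barren D H = H"
  obtains h t where "h \<in> H" "t \<in> S" "t \<notin> district B (anc D H) h \<union> pa D (district B (anc D H) h)"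
proof (cases "is_head V D B H")
  case True
  have "\<not> S - H \<subseteq> tail D B H"
  proof
    assume "S - H \<subseteq> tail D B H"
    then have "S \<in> S_sets V D B"
      unfolding S_sets_def using True assms(4) by (intro CollectI exI[of _ H] exI[of _ "S - H"]) auto
    then show False using assms(3) by blast
  qed
  then obtain t where t: "t \<in> S" "t \<notin> H" "t \<notin> tail D B H" by blast
  obtain h where h: "h \<in> H" using assms(5) by blast
  have "district B (anc D H) h \<subseteq> dis_of B (anc D H) H" using h unfolding dis_of_def by blast
  then have "t \<notin> district B (anc D H) h \<union> pa D (district B (anc D H) h)"
    using t unfolding tail_def pa_def by blast
  then show ?thesis using that h t(1) by blast
next
  case False
  then obtain a b where "a \<in> H" "b \<in> H" "b \<notin> district B (anc D H) a"
    using assms unfolding is_head_def by blast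
  moreover have "b \<notin> pa D (district B (anc D H) a)"
    using barren_no_child_in_anc[OF assms(1,6) \<open>b \<in> H\<close>] unfolding pa_def district_def by blast
  ultimately show ?thesis using that assms(4) by blast
qed

lemma m_separated_cover_if_not_S_set:
  assumes "MAG V D B" "S \<subseteq> V" "S \<noteq> {}" "S \<notin> S_sets V D B"
  obtains a b C where "(a, b, C) \<in> elem_triples V" "a \<in> S" "b \<in> S" "S \<subseteq> insert a (insert b C)"
    "m_separated D B {a} {b} C"
proof -
  have DV: "D \<subseteq> V \<times> V" and "finite V" "acyclic D" "sym B" using assms(1) unfolding MAG_def by auto
  then have "finite D" by (meson finite_SigmaI finite_subset)
  define H where "H = barren D S"
  have SH: "S \<subseteq> anc D H" unfolding H_def using subset_anc_barren[OF \<open>finite D\<close> \<open>acyclic D\<close>] .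
  have HS: "H \<subseteq> S" and bH: "barren D H = H" unfolding H_def by (auto simp: barren_subset barren_barren)
  have "H \<noteq> {}" using SH assms(3) unfolding anc_def by auto
  then obtain h t where ht: "h \<in> H" "t \<in> S"
    and t: "t \<notin> district B (anc D H) h \<union> pa D (district B (anc D H) h)"
    using outside_district_pair_if_not_S_set[OF \<open>acyclic D\<close> assms(2,4) HS _ bH] by blast
  have sep: "m_separated D B {h} {t} (anc D H - {h, t})"
    using m_separated_if_outside_district[OF \<open>finite D\<close> \<open>acyclic D\<close> \<open>sym B\<close> bH ht(1) _ t] ht(2) SH
    by blast
  have "h \<in> district B (anc D H) h" using ht(1) subset_anc[of H D] unfolding district_def by auto
  then have "h \<noteq> t" using t by blast
  moreover have "anc D H \<subseteq> V" using anc_subset[OF DV] HS assms(2) by blast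
  ultimately have "(h, t, anc D H - {h, t}) \<in> elem_triples V"
    using ht HS assms(2) unfolding elem_triples_def by blast
  moreover have "S \<subseteq> insert h (insert t (anc D H - {h, t}))" using SH by blast
  ultimately show ?thesis using that sep ht HS by blast
qed

section \<open>Upper sums of imsets\<close>

definition upper_sum :: "'a set \<Rightarrow> 'a imset \<Rightarrow> 'a set \<Rightarrow> int" where
  "upper_sum V f S = (\<Sum>T\<in>{T. S \<subseteq> T \<and> T \<subseteq> V}. f T)"

lemma char_imset_eq_upper_sum: "char_imset V u S = 1 - upper_sum V u S"
  by (simp add: char_imset_def upper_sum_def)

lemma upper_sum_delta:
  assumes "finite V"
  shows "upper_sum V (delta X) S = (if S \<subseteq> X \<and> X \<subseteq> V then 1 else 0)"
proof -
  have "finite {T. S \<subseteq> T \<and> T \<subseteq> V}" using assms by (auto intro: finite_subset[of _ "Pow V"])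
  then show ?thesis unfolding upper_sum_def delta_def by (simp add: sum.delta)
qed

lemma upper_sum_elem_imset:
  assumes "finite V" "(a, b, C) \<in> elem_triples V"
  shows "upper_sum V (elem_imset (a, b, C)) S =
           (if a \<in> S \<and> b \<in> S \<and> S \<subseteq> insert a (insert b C) then 1 else 0)"
proof -
  have abC: "a \<in> V" "b \<in> V" "a \<noteq> b" "C \<subseteq> V - {a, b}" using assms(2) by (auto simp: elem_triples_def)
  have "upper_sum V (elem_imset (a, b, C)) S =
          upper_sum V (delta (insert a (insert b C))) S - upper_sum V (delta (insert a C)) S
          - upper_sum V (delta (insert b C)) S + upper_sum V (delta C) S"
    by (simp add: upper_sum_def elem_imset_def semi_imset_def sum.distrib sum_subtractf insert_commute)
  then show ?thesis
    using abC by (simp add: upper_sum_delta[OF assms(1)] subset_insert_iff) blast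
qed

lemma upper_sum_linear_combination:
  assumes "\<And>T. w T = (\<Sum>t\<in>elem_triples V. int (k t) * elem_imset t T)"
  shows "upper_sum V w S = (\<Sum>t\<in>elem_triples V. int (k t) * upper_sum V (elem_imset t) S)"
  unfolding upper_sum_def assms by (simp add: sum.swap[of _ "{T. S \<subseteq> T \<and> T \<subseteq> V}"] sum_distrib_left)

lemma upper_sum_combinatorial_nonneg:
  assumes "finite V" "combinatorial V w"
  shows "0 \<le> upper_sum V w S"
proof -
  obtain k where "\<And>T. w T = (\<Sum>t\<in>elem_triples V. int (k t) * elem_imset t T)"
    using assms(2) unfolding combinatorial_def by blast
  then show ?thesis
    using upper_sum_elem_imset[OF assms(1)] by (auto simp: upper_sum_linear_combination intro!: sum_nonneg)
qed

lemma finite_elem_triples: "finite V \<Longrightarrow> finite (elem_triples V)"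
  by (rule finite_subset[of _ "V \<times> V \<times> Pow V"]) (auto simp: elem_triples_def)

text \<open>Witness: the decomposition of n u with one copy of u<a,b|C> removed.\<close>

lemma represented_if_coefficient_pos:
  assumes "finite V"
    and k: "\<And>T. int n * u T = (\<Sum>t\<in>elem_triples V. int (k t) * elem_imset t T)"
    and t: "(a, b, C) \<in> elem_triples V" and pos: "0 < k (a, b, C)"
  shows "represented V u {a} {b} C"
  unfolding represented_def combinatorial_def
proof (intro exI[of _ n] exI[of _ "k((a, b, C) := k (a, b, C) - 1)"] allI)
  fix T
  let ?t = "(a, b, C)" and ?k' = "k((a, b, C) := k (a, b, C) - 1)"
  have fin: "finite (elem_triples V)" using finite_elem_triples[OF assms(1)] .
  have "(\<Sum>t'\<in>elem_triples V. int (?k' t') * elem_imset t' T)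
      = int (k ?t - 1) * elem_imset ?t T + (\<Sum>t'\<in>elem_triples V - {?t}. int (k t') * elem_imset t' T)"
    using sum.remove[OF fin t, of "\<lambda>t'. int (?k' t') * elem_imset t' T"] by simp
  also have "\<dots> = int n * u T - elem_imset ?t T"
    using k[of T] sum.remove[OF fin t, of "\<lambda>t'. int (k t') * elem_imset t' T"] pos
    by (simp add: of_nat_diff algebra_simps)
  finally show "int n * u T - semi_imset {a} {b} C T = (\<Sum>t'\<in>elem_triples V. int (?k' t') * elem_imset t' T)"
    by (simp add: elem_imset_def)
qed

lemma upper_sum_eq_0_if_no_represented_cover:
  assumes "finite V" "structural V u"
    and no_cover: "\<And>a b C. (a, b, C) \<in> elem_triples V \<Longrightarrow> a \<in> S \<Longrightarrow> b \<in> S \<Longrightarrow>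
             S \<subseteq> insert a (insert b C) \<Longrightarrow> \<not> represented V u {a} {b} C"
  shows "upper_sum V u S = 0"
proof -
  obtain n k where n: "0 < n" and k: "\<And>T. int n * u T = (\<Sum>t\<in>elem_triples V. int (k t) * elem_imset t T)"
    using assms(2) unfolding structural_def combinatorial_def by blast
  have term_0: "int (k t) * upper_sum V (elem_imset t) S = 0" if t: "t \<in> elem_triples V" for t
  proof -
    obtain a b C where t_eq: "t = (a, b, C)" by (cases t)
    show ?thesis
      using upper_sum_elem_imset[OF assms(1) t[unfolded t_eq]] no_cover[OF t[unfolded t_eq]]
        represented_if_coefficient_pos[OF assms(1) k t[unfolded t_eq]]
      unfolding t_eq by (cases "k (a, b, C) = 0") auto
  qed
  have "int n * upper_sum V u S = upper_sum V (\<lambda>T. int n * u T) S"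
    by (simp add: upper_sum_def sum_distrib_left)
  also have "\<dots> = (\<Sum>t\<in>elem_triples V. int (k t) * upper_sum V (elem_imset t) S)"
    by (rule upper_sum_linear_combination[OF k])
  also have "\<dots> = 0" using term_0 by (intro sum.neutral) blast
  finally show ?thesis using n by simp
qed

lemma upper_sum_pos_if_represented_cover:
  assumes "finite V" "(a, b, C) \<in> elem_triples V"
    and "a \<in> S" "b \<in> S" "S \<subseteq> insert a (insert b C)" "represented V u {a} {b} C"
  shows "0 < upper_sum V u S"
proof -
  obtain k where "combinatorial V (\<lambda>T. int k * u T - semi_imset {a} {b} C T)"
    using assms(6) unfolding represented_def by blast
  then have "0 \<le> upper_sum V (\<lambda>T. int k * u T - semi_imset {a} {b} C T) S"
    using upper_sum_combinatorial_nonneg[OF assms(1)] by blast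
  also have "\<dots> = int k * upper_sum V u S - 1"
    using upper_sum_elem_imset[OF assms(1,2), of S] assms(3-5)
    by (simp add: upper_sum_def elem_imset_def sum_subtractf sum_distrib_left)
  finally show ?thesis by (smt (verit) mult_nonneg_nonpos of_nat_0_le_iff)
qed

lemma represented_iff_m_separated:
  assumes "I_imset V u = I_graph V D B" "(a, b, C) \<in> elem_triples V"
  shows "represented V u {a} {b} C \<longleftrightarrow> m_separated D B {a} {b} C"
proof -
  have "disjoint_triple V {a} {b} C" using assms(2) unfolding elem_triples_def disjoint_triple_def by auto
  then show ?thesis using assms(1) unfolding I_imset_def I_graph_def by blast
qed

lemma upper_sum_eq_0_if_S_set:
  assumes "MAG V D B" "structural V u" "I_imset V u = I_graph V D B" "S \<in> S_sets V D B"
  shows "upper_sum V u S = 0"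
proof -
  have "finite V" "sym B" using assms(1) unfolding MAG_def by auto
  show ?thesis
  proof (rule upper_sum_eq_0_if_no_represented_cover[OF \<open>finite V\<close> assms(2)])
    fix a b C
    assume t: "(a, b, C) \<in> elem_triples V" and "a \<in> S" "b \<in> S" "S \<subseteq> insert a (insert b C)"
    then obtain vs es where "is_path D B a b vs es" "m_connecting D B C vs es"
      using m_connecting_path_if_S_set[OF \<open>sym B\<close> assms(4)] by blast
    then show "\<not> represented V u {a} {b} C"
      unfolding represented_iff_m_separated[OF assms(3) t] m_separated_def by blast
  qed
qed

lemma upper_sum_pos_if_not_S_set:
  assumes "MAG V D B" "I_imset V u = I_graph V D B" "S \<subseteq> V" "S \<noteq> {}" "S \<notin> S_sets V D B"
  shows "0 < upper_sum V u S"
proof -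
  have "finite V" using assms(1) unfolding MAG_def by auto
  obtain a b C where t: "(a, b, C) \<in> elem_triples V" and "a \<in> S" "b \<in> S"
    "S \<subseteq> insert a (insert b C)" "m_separated D B {a} {b} C"
    using m_separated_cover_if_not_S_set[OF assms(1,3,4,5)] by blast
  then show ?thesis
    using upper_sum_pos_if_represented_cover[OF \<open>finite V\<close> t]
      represented_iff_m_separated[OF assms(2) t] by blast
qed

theorem proposition3p12:
  fixes V :: "'a set" and D B :: "('a \<times> 'a) set" and u :: "'a set \<Rightarrow> int"
  assumes "MAG V D B"
    and "structural V u"
    and "I_imset V u = I_graph V D B"
  shows "\<forall>S. S \<subseteq> V \<longrightarrow>
           (S \<in> S_sets V D B \<longrightarrow> char_imset V u S = 1) \<and>
           (S \<noteq> {} \<and> S \<notin> S_sets V D B \<longrightarrow> char_imset V u S \<le> 0)"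
proof (intro allI impI conjI)
  fix S
  assume "S \<subseteq> V" "S \<in> S_sets V D B"
  then show "char_imset V u S = 1"
    using upper_sum_eq_0_if_S_set[OF assms] by (simp add: char_imset_eq_upper_sum)
next
  fix S
  assume "S \<subseteq> V" "S \<noteq> {} \<and> S \<notin> S_sets V D B"
  then have "0 < upper_sum V u S" using upper_sum_pos_if_not_S_set[OF assms(1,3)] by blast
  then show "char_imset V u S \<le> 0" by (simp add: char_imset_eq_upper_sum)
qed

end
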